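(* Let $O$ be a validated totally-ordered object, $S$ a sequence of operations, $i\neq j$ processes, and $op_i, op_j\notin S$ operations issued by $i$ and $j$ respectively, such that $\mathrm{valid}(S,op_i,i)=\mathit{True}$, $\mathrm{valid}(S,op_j,j)=\mathit{True}$, $\mathrm{valid}(S\|op_j,op_i,i)=\mathit{False}$ and $\mathrm{valid}(S\|op_i,op_j,j)=\mathit{False}$. Then, in an asynchronous system in which at most one of $i,j$ crashes, the following algorithm solves consensus between $i$ and $j$ (every correct one of them decides, both decide the same value, and the decided value was proposed by $i$ or $j$). The object $O$ is initialized with state $S$; $c_i,c_j$ are reliable atomic SWMR registers, written only by $i$ resp. $j$, initially $\bot$. Process $i$, proposing $v_i$: writes $v_i$ to $c_i$; calls $r\leftarrow O.\mathrm{apply}(op_i,i)$; if $r=(\mathit{NACK},-)$ it reads $v_j$ from $c_j$ and decides it, otherwise it decides $v_i$. Process $j$ executes the symmetric code with $v_j$, $c_j$, $op_j$ and reading $c_i$.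
   Context: Validated object: given a predicate $\mathrm{valid}(\cdot, op, i)$ and function $\mathrm{execute}(\cdot, op, i)$, first argument a strictly partially ordered set of operations (a sequence when totally ordered), $op$ an operation, $i$ its issuer. Clients use $\mathrm{apply}(op,i)$, returning $(\mathit{ACK}, r)$ if $op$ is found valid and executed with result $r$, and $(\mathit{NACK},-)$ otherwise. For a sequence $S$, $S\|op$ denotes $S$ followed by $op$. The history of a run contains only operations for which $\mathrm{apply}$ returns $\mathit{ACK}$; $C(R)$ is the set of complete such operations; $op\rightarrow op'$ means the response of $op$ precedes the invocation of $op'$. Validated totally-ordered object: in every run $R$ there is a total order $\ll$ on $C(R)$ such that (1) $op\rightarrow op'$ implies $op\ll op'$; (2) for every $op\in C(R)$ issued by $i$, with $P(op)=\{op'\in C(R): op'\ll op\}$, $\mathrm{valid}(\langle P(op),\ll\rangle,op,i)=\mathit{True}$ and $op$ returns $\mathrm{execute}(\langle P(op),\ll\rangle,op,i)$. The object $O$ is assumed reliable (it never fails). *)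

theory Defs
  imports Main
begin

text \<open>
The object O is modelled as a linearizable object: apply(op,p) consists of an invocation
step, a linearization step (the point at which op is placed in the total order; it is
ACKed and appended to the order iff it is valid w.r.t. S followed by the operations
ordered before it, otherwise NACKed), and a response step.
\<close>

datatype 'r resp = ACK 'r | NACK

record ('p, 'v, 'o, 'r) cstate =
  pc  :: "'p \<Rightarrow> nat"
  reg :: "'p \<Rightarrow> 'v option"       \<comment> \<open>register c_p; None is bottom\<close>
  ost :: "'o list"               \<comment> \<open>S followed by the operations linearized and ACKed so far\<close>
  res :: "'p \<Rightarrow> 'r resp option"
  dec :: "'p \<Rightarrow> 'v option option" \<comment> \<open>None: undecided; Some d: decided d (d may be bottom)\<close>

definition init_state :: "'o list \<Rightarrow> ('p, 'v, 'o, 'r) cstate" where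
  "init_state S = \<lparr> pc = (\<lambda>_. 0), reg = (\<lambda>_. None), ost = S,
                    res = (\<lambda>_. None), dec = (\<lambda>_. None) \<rparr>"

definition other :: "'p \<Rightarrow> 'p \<Rightarrow> 'p \<Rightarrow> 'p" where
  "other i j p = (if p = i then j else i)"

text \<open>One atomic step of process p (steps of processes other than i, j do nothing).
 pc 0: write own proposal into own register;
 pc 1: invoke O.apply(op_p, p);
 pc 2: linearization point of the apply call inside O;
 pc 3: response of apply; on ACK decide own proposal, on NACK continue;
 pc 4: read the other register and decide the value read;
 pc 5: done.\<close>
definition alg_step ::
  "('o list \<Rightarrow> 'o \<Rightarrow> 'p \<Rightarrow> bool) \<Rightarrow> ('o list \<Rightarrow> 'o \<Rightarrow> 'p \<Rightarrow> 'r) \<Rightarrow> 'p \<Rightarrow> 'p \<Rightarrow>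
   ('p \<Rightarrow> 'v) \<Rightarrow> ('p \<Rightarrow> 'o) \<Rightarrow> 'p \<Rightarrow> ('p, 'v, 'o, 'r) cstate \<Rightarrow> ('p, 'v, 'o, 'r) cstate" where
  "alg_step valid exec i j vp opr p s =
    (if p \<noteq> i \<and> p \<noteq> j then s else
     (case pc s p of
        0 \<Rightarrow> s\<lparr> reg := (reg s)(p := Some (vp p)), pc := (pc s)(p := 1) \<rparr>
      | Suc 0 \<Rightarrow> s\<lparr> pc := (pc s)(p := 2) \<rparr>
      | Suc (Suc 0) \<Rightarrow>
          (if valid (ost s) (opr p) p
           then s\<lparr> ost := ost s @ [opr p],
                   res := (res s)(p := Some (ACK (exec (ost s) (opr p) p))),
                   pc := (pc s)(p := 3) \<rparr>
           else s\<lparr> res := (res s)(p := Some NACK), pc := (pc s)(p := 3) \<rparr>)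
      | Suc (Suc (Suc 0)) \<Rightarrow>
          (case res s p of
             Some (ACK r) \<Rightarrow> s\<lparr> dec := (dec s)(p := Some (Some (vp p))), pc := (pc s)(p := 5) \<rparr>
           | _ \<Rightarrow> s\<lparr> pc := (pc s)(p := 4) \<rparr>)
      | Suc (Suc (Suc (Suc 0))) \<Rightarrow>
          s\<lparr> dec := (dec s)(p := Some (reg s (other i j p))), pc := (pc s)(p := 5) \<rparr>
      | _ \<Rightarrow> s))"

definition is_run ::
  "('o list \<Rightarrow> 'o \<Rightarrow> 'p \<Rightarrow> bool) \<Rightarrow> ('o list \<Rightarrow> 'o \<Rightarrow> 'p \<Rightarrow> 'r) \<Rightarrow> 'o list \<Rightarrow> 'p \<Rightarrow> 'p \<Rightarrow>
   ('p \<Rightarrow> 'v) \<Rightarrow> ('p \<Rightarrow> 'o) \<Rightarrow> (nat \<Rightarrow> 'p) \<Rightarrow> (nat \<Rightarrow> ('p, 'v, 'o, 'r) cstate) \<Rightarrow> bool" where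
  "is_run valid exec S i j vp opr sch \<sigma> \<longleftrightarrow>
     \<sigma> 0 = init_state S \<and>
     (\<forall>n. \<sigma> (Suc n) = alg_step valid exec i j vp opr (sch n) (\<sigma> n))"

text \<open>A process is correct in a run iff it takes infinitely many steps; otherwise it crashed.\<close>
definition correct :: "(nat \<Rightarrow> 'p) \<Rightarrow> 'p \<Rightarrow> bool" where
  "correct sch p \<longleftrightarrow> infinite {n. sch n = p}"

end

theory Submission
  imports Defs
begin

text \<open>
Whichever of op_i, op_j is linearized first in O is valid after S and gets ACK; the other
is then invalid after S followed by the first, so it gets NACK. Hence exactly one process,
the winner, decides its own proposal, while a NACKed process reads the winner's register,
which the winner wrote before invoking apply. An invariant of all reachable states records
this situation; termination holds because every step of a process advances its program
counter until it has decided.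
\<close>

locale two_process_algorithm =
  fixes valid :: "'o list \<Rightarrow> 'o \<Rightarrow> 'p \<Rightarrow> bool"
    and exec :: "'o list \<Rightarrow> 'o \<Rightarrow> 'p \<Rightarrow> 'r"
    and i j :: 'p
    and vp :: "'p \<Rightarrow> 'v" and opr :: "'p \<Rightarrow> 'o"
begin

abbreviation step :: "'p \<Rightarrow> ('p, 'v, 'o, 'r) cstate \<Rightarrow> ('p, 'v, 'o, 'r) cstate" where
  "step \<equiv> alg_step valid exec i j vp opr"

lemma step_cases:
  assumes "q = i \<or> q = j"
  obtains (write_reg) "pc s q = 0"
      "step q s = s\<lparr>reg := (reg s)(q := Some (vp q)), pc := (pc s)(q := 1)\<rparr>"
  | (invoke) "pc s q = 1" "step q s = s\<lparr>pc := (pc s)(q := 2)\<rparr>"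
  | (lin_ack) "pc s q = 2" "valid (ost s) (opr q) q"
      "step q s = s\<lparr>ost := ost s @ [opr q],
         res := (res s)(q := Some (ACK (exec (ost s) (opr q) q))), pc := (pc s)(q := 3)\<rparr>"
  | (lin_nack) "pc s q = 2" "\<not> valid (ost s) (opr q) q"
      "step q s = s\<lparr>res := (res s)(q := Some NACK), pc := (pc s)(q := 3)\<rparr>"
  | (decide_own) r where "pc s q = 3" "res s q = Some (ACK r)"
      "step q s = s\<lparr>dec := (dec s)(q := Some (Some (vp q))), pc := (pc s)(q := 5)\<rparr>"
  | (await_read) "pc s q = 3" "\<forall>r. res s q \<noteq> Some (ACK r)"
      "step q s = s\<lparr>pc := (pc s)(q := 4)\<rparr>"
  | (read_decide) "pc s q = 4"
      "step q s = s\<lparr>dec := (dec s)(q := Some (reg s (other i j q))), pc := (pc s)(q := 5)\<rparr>"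
  | (finished) "5 \<le> pc s q" "step q s = s"
proof -
  \<comment> \<open>Stated as an equation so that simp rewrites the guard of alg_step directly.\<close>
  have q: "(q \<noteq> i \<and> q \<noteq> j) = False" using assms by blast
  consider "pc s q = 0" | "pc s q = 1" | "pc s q = 2" | "pc s q = 3" | "pc s q = 4" | "5 \<le> pc s q"
    by linarith
  then show thesis
  proof cases
    case 1
    show thesis by (rule write_reg[OF 1]) (simp add: alg_step_def 1 q)
  next
    case 2
    show thesis by (rule invoke[OF 2]) (simp add: alg_step_def 2 q)
  next
    case 3
    show thesis
    proof (cases "valid (ost s) (opr q) q")
      case True
      show thesis by (rule lin_ack[OF 3 True]) (simp add: alg_step_def 3 q True numeral_eq_Suc)
    next
      case False
      show thesis by (rule lin_nack[OF 3 False]) (simp add: alg_step_def 3 q False numeral_eq_Suc)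
    qed
  next
    case 4
    show thesis
    proof (cases "res s q")
      case None
      show thesis by (rule await_read[OF 4]) (simp_all add: alg_step_def 4 q None numeral_eq_Suc)
    next
      case (Some x)
      show thesis
      proof (cases x)
        case (ACK r)
        show thesis by (rule decide_own[OF 4]) (simp_all add: alg_step_def 4 q Some ACK numeral_eq_Suc)
      next
        case NACK
        show thesis by (rule await_read[OF 4]) (simp_all add: alg_step_def 4 q Some NACK numeral_eq_Suc)
      qed
    qed
  next
    case 5
    show thesis by (rule read_decide[OF 5]) (simp add: alg_step_def 5 q numeral_eq_Suc)
  next
    case 6
    then obtain k where k: "pc s q = 5 + k" using le_Suc_ex by blast
    show thesis by (rule finished[OF 6]) (simp add: alg_step_def k q numeral_eq_Suc)
  qed
qed

lemma step_idle: "q \<noteq> i \<Longrightarrow> q \<noteq> j \<Longrightarrow> step q s = s"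
  by (simp add: alg_step_def)

lemma step_other:
  assumes "q \<noteq> p"
  shows "pc (step q s) p = pc s p \<and> reg (step q s) p = reg s p \<and>
    res (step q s) p = res s p \<and> dec (step q s) p = dec s p"
proof (cases "q = i \<or> q = j")
  case True
  then show ?thesis
    by (cases rule: step_cases[of q s]) (simp_all add: assms not_sym[OF assms])
qed (simp add: step_idle)

lemma step_finished:
  assumes "5 \<le> pc s p"
  shows "pc (step q s) p = pc s p \<and> dec (step q s) p = dec s p"
proof -
  consider "q \<noteq> p" | "q = p" "p \<noteq> i" "p \<noteq> j" | "q = p" "p = i \<or> p = j" by blast
  then show ?thesis
  proof cases
    case 3
    from 3(2) show ?thesis
      unfolding 3(1) by (cases rule: step_cases[of p s]) (use assms in simp_all)
  qed (simp_all add: step_other step_idle)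
qed

lemma pc_step_mono: "pc s p \<le> pc (step q s) p"
proof -
  consider "q \<noteq> p" | "q = p" "p \<noteq> i" "p \<noteq> j" | "q = p" "p = i \<or> p = j" by blast
  then show ?thesis
  proof cases
    case 3
    from 3(2) show ?thesis
      unfolding 3(1) by (cases rule: step_cases[of p s]) simp_all
  qed (simp_all add: step_other step_idle)
qed

lemma pc_step_less:
  assumes "p = i \<or> p = j" and "pc s p < 5"
  shows "pc s p < pc (step p s) p"
  using assms(1) by (cases rule: step_cases[of p s]) (use assms(2) in simp_all)

lemma pc_run_mono:
  assumes run: "is_run valid exec S i j vp opr sch \<sigma>" and "n \<le> m"
  shows "pc (\<sigma> n) p \<le> pc (\<sigma> m) p"
  using \<open>n \<le> m\<close>
proof (induction m rule: dec_induct)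
  case (step k)
  then show ?case
    using run pc_step_mono order_trans unfolding is_run_def by metis
qed simp

lemma dec_run_finished:
  assumes run: "is_run valid exec S i j vp opr sch \<sigma>" and fin: "5 \<le> pc (\<sigma> n) p" and "n \<le> m"
  shows "dec (\<sigma> m) p = dec (\<sigma> n) p"
  using \<open>n \<le> m\<close>
proof (induction m rule: dec_induct)
  case (step k)
  have "5 \<le> pc (\<sigma> k) p" using pc_run_mono[OF run step.hyps(1), of p] fin by linarith
  then show ?case using run step.IH step_finished unfolding is_run_def by metis
qed simp

lemma correct_run_finishes:
  assumes run: "is_run valid exec S i j vp opr sch \<sigma>"
    and p: "p = i \<or> p = j" and "correct sch p"
  shows "\<exists>n. 5 \<le> pc (\<sigma> n) p"
proof -
  have scheduled: "\<exists>k\<ge>n. sch k = p" for n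
  proof -
    have "\<not> {k. sch k = p} \<subseteq> {..<n}"
      using \<open>correct sch p\<close> finite_subset unfolding correct_def by blast
    then show ?thesis by (auto simp: not_less)
  qed
  have "c \<le> 5 \<Longrightarrow> \<exists>n. c \<le> pc (\<sigma> n) p" for c
  proof (induction c)
    case (Suc c)
    then obtain n where n: "c \<le> pc (\<sigma> n) p" by auto
    obtain k where k: "n \<le> k" "sch k = p" using scheduled by blast
    have "c \<le> pc (\<sigma> k) p" using pc_run_mono[OF run k(1), of p] n by linarith
    moreover have "pc (\<sigma> k) p < 5 \<Longrightarrow> pc (\<sigma> k) p < pc (\<sigma> (Suc k)) p"
      using run pc_step_less[OF p] k(2) unfolding is_run_def by metis
    ultimately show ?case using Suc.prems by (metis Suc_leI le_trans not_less)
  qed simp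
  then show ?thesis by blast
qed

end

locale conflicting_operations = two_process_algorithm valid exec i j vp opr
  for valid :: "'o list \<Rightarrow> 'o \<Rightarrow> 'p \<Rightarrow> bool"
    and exec :: "'o list \<Rightarrow> 'o \<Rightarrow> 'p \<Rightarrow> 'r"
    and i j :: 'p
    and vp :: "'p \<Rightarrow> 'v" and opr :: "'p \<Rightarrow> 'o" +
  fixes S :: "'o list"
  assumes distinct_procs: "i \<noteq> j"
    and valid_i: "valid S (opr i) i" and valid_j: "valid S (opr j) j"
    and conflict_i: "\<not> valid (S @ [opr j]) (opr i) i"
    and conflict_j: "\<not> valid (S @ [opr i]) (opr j) j"
begin

definition process_inv :: "('p, 'v, 'o, 'r) cstate \<Rightarrow> 'p \<Rightarrow> 'p \<Rightarrow> bool" where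
  "process_inv s p q \<longleftrightarrow>
     pc s p \<le> 5 \<and> (1 \<le> pc s p \<longrightarrow> reg s p = Some (vp p)) \<and>
     (res s p = None \<longleftrightarrow> pc s p \<le> 2) \<and> (pc s p = 4 \<longrightarrow> res s p = Some NACK) \<and>
     (dec s p = None \<longleftrightarrow> pc s p < 5) \<and>
     (\<forall>d. dec s p = Some d \<longrightarrow> d = Some (if res s p = Some NACK then vp q else vp p))"

definition winner :: "('p, 'v, 'o, 'r) cstate \<Rightarrow> 'p \<Rightarrow> 'p \<Rightarrow> bool" where
  "winner s w q \<longleftrightarrow>
     ost s = S @ [opr w] \<and> 3 \<le> pc s w \<and> (\<exists>r. res s w = Some (ACK r)) \<and>
     (3 \<le> pc s q \<longrightarrow> res s q = Some NACK)"

definition consensus_inv :: "('p, 'v, 'o, 'r) cstate \<Rightarrow> bool" where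
  "consensus_inv s \<longleftrightarrow> process_inv s i j \<and> process_inv s j i \<and>
     ((ost s = S \<and> pc s i \<le> 2 \<and> pc s j \<le> 2) \<or> winner s i j \<or> winner s j i)"

lemma winner_exclusive: "winner s i j \<Longrightarrow> \<not> winner s j i"
  by (auto simp: winner_def)

lemma consensus_inv_init: "consensus_inv (init_state S)"
  by (simp add: consensus_inv_def process_inv_def init_state_def)

lemma process_inv_local:
  assumes "pc s' p = pc s p" and "reg s' p = reg s p" and "res s' p = res s p" and "dec s' p = dec s p"
  shows "process_inv s' p q \<longleftrightarrow> process_inv s p q"
  using assms by (simp add: process_inv_def)

lemma consensus_inv_step:
  assumes pq: "(p, q) \<in> {(i, j), (j, i)}" and inv: "consensus_inv s"
  shows "consensus_inv (step p s)"
proof -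
  have "p \<noteq> q" "p = i \<or> p = j" "other i j p = q"
    and valid_p: "valid S (opr p) p" and conflict_p: "\<not> valid (S @ [opr q]) (opr p) p"
    using pq distinct_procs valid_i valid_j conflict_i conflict_j by (auto simp: other_def)
  have inv_pq: "consensus_inv t \<longleftrightarrow> process_inv t p q \<and> process_inv t q p \<and>
      ((ost t = S \<and> pc t p \<le> 2 \<and> pc t q \<le> 2) \<or> winner t p q \<or> winner t q p)" for t
    using pq unfolding consensus_inv_def by auto
  from inv have p: "process_inv s p q" and q: "process_inv s q p"
    and order: "(ost s = S \<and> pc s p \<le> 2 \<and> pc s q \<le> 2) \<or> winner s p q \<or> winner s q p"
    unfolding inv_pq by blast+
  have "process_inv (step p s) q p"
    by (rule process_inv_local[THEN iffD2, OF _ _ _ _ q]) (simp_all add: step_other[OF \<open>p \<noteq> q\<close>])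
  moreover have "process_inv (step p s) p q \<and>
      ((ost (step p s) = S \<and> pc (step p s) p \<le> 2 \<and> pc (step p s) q \<le> 2) \<or>
       winner (step p s) p q \<or> winner (step p s) q p)"
    using \<open>p = i \<or> p = j\<close>
  proof (cases rule: step_cases[of p s])
    case lin_ack
    \<comment> \<open>q's operation cannot have been linearized first, since op_p is invalid after it.\<close>
    have "ost s = S \<and> pc s q \<le> 2"
      using order lin_ack(1,2) conflict_p by (auto simp: winner_def)
    then show ?thesis
      using p lin_ack \<open>p \<noteq> q\<close> by (auto simp: process_inv_def winner_def)
  next
    case lin_nack
    have "winner s q p"
      using order lin_nack(1,2) valid_p by (auto simp: winner_def)
    then show ?thesis
      using p lin_nack \<open>p \<noteq> q\<close> by (auto simp: process_inv_def winner_def)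
  next
    case read_decide
    have "winner s q p"
      using order read_decide(1) p by (auto simp: process_inv_def winner_def)
    \<comment> \<open>The winner wrote its register before invoking apply, so a NACKed process reads its proposal.\<close>
    moreover have "reg s q = Some (vp q)"
      using calculation q by (auto simp: process_inv_def winner_def)
    ultimately show ?thesis
      using p read_decide \<open>p \<noteq> q\<close> \<open>other i j p = q\<close> by (auto simp: process_inv_def winner_def)
  next
    case finished
    then show ?thesis using p order by simp
  qed (use p order \<open>p \<noteq> q\<close> in \<open>auto simp: process_inv_def winner_def\<close>)
  ultimately show ?thesis unfolding inv_pq by blast
qed

lemma consensus_inv_run:
  assumes "is_run valid exec S i j vp opr sch \<sigma>"
  shows "consensus_inv (\<sigma> n)"
proof (induction n)
  case 0
  then show ?case using assms consensus_inv_init by (simp add: is_run_def)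
next
  case (Suc n)
  have step: "\<sigma> (Suc n) = step (sch n) (\<sigma> n)"
    using assms by (simp add: is_run_def)
  consider "sch n = i" | "sch n = j" | "sch n \<noteq> i" "sch n \<noteq> j" by blast
  then show ?case
  proof cases
    case 1
    then show ?thesis using consensus_inv_step[of i j] Suc.IH by (simp add: step)
  next
    case 2
    then show ?thesis using consensus_inv_step[of j i] Suc.IH by (simp add: step)
  next
    case 3
    then show ?thesis using Suc.IH by (simp add: step step_idle)
  qed
qed

lemma decided_iff_finished:
  assumes "consensus_inv s" and "p = i \<or> p = j"
  shows "dec s p \<noteq> None \<longleftrightarrow> 5 \<le> pc s p"
proof -
  have "process_inv s p (other i j p)"
    using assms distinct_procs unfolding consensus_inv_def other_def by auto
  then show ?thesis unfolding process_inv_def by auto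
qed

lemma decision_of_winner:
  assumes inv: "consensus_inv s" and p: "p = i \<or> p = j" and d: "dec s p = Some d"
  shows "(winner s i j \<and> d = Some (vp i)) \<or> (winner s j i \<and> d = Some (vp j))"
proof -
  define q where "q = other i j p"
  have pq: "(p, q) \<in> {(i, j), (j, i)}" using p distinct_procs by (auto simp: q_def other_def)
  then have "process_inv s p q"
    and order: "(ost s = S \<and> pc s p \<le> 2 \<and> pc s q \<le> 2) \<or> winner s p q \<or> winner s q p"
    using inv unfolding consensus_inv_def by auto
  then have d_res: "d = Some (if res s p = Some NACK then vp q else vp p)" and "5 \<le> pc s p"
    using d unfolding process_inv_def by auto
  then have "winner s p q \<and> d = Some (vp p) \<or> winner s q p \<and> d = Some (vp q)"
    using order d_res by (auto simp: winner_def)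
  then show ?thesis using pq by auto
qed

lemma run_termination:
  assumes "is_run valid exec S i j vp opr sch \<sigma>" and "p = i \<or> p = j" and "correct sch p"
  shows "\<exists>n. dec (\<sigma> n) p \<noteq> None"
  using correct_run_finishes[OF assms] decided_iff_finished[OF consensus_inv_run[OF assms(1)] assms(2)]
  by blast

lemma run_agreement:
  assumes run: "is_run valid exec S i j vp opr sch \<sigma>"
    and p: "p = i \<or> p = j" and q: "q = i \<or> q = j"
    and d: "dec (\<sigma> n) p = Some d" and e: "dec (\<sigma> m) q = Some e"
  shows "d = e"
proof -
  note inv = consensus_inv_run[OF run]
  have "5 \<le> pc (\<sigma> n) p" "5 \<le> pc (\<sigma> m) q"
    using decided_iff_finished[OF inv p, of n] decided_iff_finished[OF inv q, of m] d e by simp_all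
  then have "dec (\<sigma> (max n m)) p = Some d" "dec (\<sigma> (max n m)) q = Some e"
    using dec_run_finished[OF run] d e by (metis max.cobounded1, metis max.cobounded2)
  then show ?thesis
    using decision_of_winner[OF inv p] decision_of_winner[OF inv q] winner_exclusive by blast
qed

lemma run_validity:
  assumes "is_run valid exec S i j vp opr sch \<sigma>" and "p = i \<or> p = j" and "dec (\<sigma> n) p = Some d"
  shows "d = Some (vp i) \<or> d = Some (vp j)"
  using decision_of_winner[OF consensus_inv_run[OF assms(1)] assms(2,3)] by blast

end

theorem mainTheorem7:
  fixes valid :: "'o list \<Rightarrow> 'o \<Rightarrow> 'p \<Rightarrow> bool"
    and exec :: "'o list \<Rightarrow> 'o \<Rightarrow> 'p \<Rightarrow> 'r"
    and S :: "'o list" and i j :: 'p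
    and opr :: "'p \<Rightarrow> 'o" and vp :: "'p \<Rightarrow> 'v"
    and sch :: "nat \<Rightarrow> 'p" and \<sigma> :: "nat \<Rightarrow> ('p, 'v, 'o, 'r) cstate"
  assumes "i \<noteq> j"
    and "opr i \<notin> set S" and "opr j \<notin> set S"
    and "valid S (opr i) i" and "valid S (opr j) j"
    and "\<not> valid (S @ [opr j]) (opr i) i"
    and "\<not> valid (S @ [opr i]) (opr j) j"
    and "is_run valid exec S i j vp opr sch \<sigma>"
    and "correct sch i \<or> correct sch j"
  shows "(\<forall>p\<in>{i, j}. correct sch p \<longrightarrow> (\<exists>n. dec (\<sigma> n) p \<noteq> None))
       \<and> (\<forall>p\<in>{i, j}. \<forall>q\<in>{i, j}. \<forall>n m d e.
            dec (\<sigma> n) p = Some d \<longrightarrow> dec (\<sigma> m) q = Some e \<longrightarrow> d = e)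
       \<and> (\<forall>p\<in>{i, j}. \<forall>n d. dec (\<sigma> n) p = Some d \<longrightarrow> d = Some (vp i) \<or> d = Some (vp j))"
proof -
  interpret conflicting_operations valid exec i j vp opr S
    using assms(1,4-7) by unfold_locales
  note run = assms(8)
  show ?thesis
  proof (intro conjI ballI allI impI)
    fix p assume "p \<in> {i, j}" and "correct sch p"
    then show "\<exists>n. dec (\<sigma> n) p \<noteq> None" using run_termination[OF run] by blast
  next
    fix p q n m d e assume "p \<in> {i, j}" "q \<in> {i, j}"
      and "dec (\<sigma> n) p = Some d" "dec (\<sigma> m) q = Some e"
    then show "d = e" using run_agreement[OF run] by blast
  next
    fix p n d assume "p \<in> {i, j}" and "dec (\<sigma> n) p = Some d"
    then show "d = Some (vp i) \<or> d = Some (vp j)" using run_validity[OF run] by blast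
  qed
qed

end
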